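(* For $\alpha,\beta>0$ with $\alpha\beta=\pi^2$, \[ \sum_{n=1}^{\infty}\frac{e^{n\alpha}}{n\left(e^{2n\alpha}-1\right)}-\sum_{n=1}^{\infty}\frac{(-1)^n}{n\left(e^{2n\beta}-1\right)}=-\frac{1}{2}\log 2+\frac{\alpha+2\beta}{24}. \] *)

theory Defs
  imports "HOL-Analysis.Analysis"
begin

end

theory Submission
  imports Defs "HOL-Decision_Procs.Approximation_Bounds"
begin

text \<open>
  Write S(y) for the sum of eta_term y n over n, that is the sum of 1 / (n (exp (2 pi n y) - 1))
  over n \<ge> 1. Splitting the first series with E / (E^2 - 1) = 1 / (E - 1) - 1 / (E^2 - 1), and
  the alternating series into its even and odd terms, the left-hand side becomes
  (S(y/2) - S(2/y)) - (S(y) - S(1/y)) for y = alpha / pi, because alpha beta = pi^2. The theorem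
  is thus the transformation law S(y) - S(1/y) = pi / (12 y) - pi y / 12 + (ln y) / 2 of the
  Dedekind eta function, used at y and at y / 2.

  The partial fraction expansion of coth,
  obtained from the reflection formula for the digamma function, expands every term of S(y) and
  of S(1/y) into a series of lattice terms y / (n^2 y^2 + k^2) plus explicit corrections.
  Truncating the double series at n \<le> N and k \<le> M, the finite rectangles of the two
  expansions coincide. For M close to N y the corrections tend to the right-hand side, using
  the sum of 1 / n^2 and the asymptotics of the harmonic numbers, while both tails are Riemann
  sums of the integral of arctan t / t over [0, 1] and cancel in the limit.
\<close>

section \<open>Partial fractions for the hyperbolic cotangent\<close>

lemma Digamma_reflection_complex:
  fixes z :: complex
  assumes z: "z \<notin> \<int>"
  shows "Digamma (1 - z) - Digamma z = of_real pi * cot (of_real pi * z)"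
proof -
  have z1: "z \<notin> \<int>\<^sub>\<le>\<^sub>0" using z nonpos_Ints_subset_Ints by blast
  have z2: "1 - z \<notin> \<int>\<^sub>\<le>\<^sub>0" using z nonpos_Ints_subset_Ints Ints_diff[of 1 "1-z"] by force
  \<comment> \<open>Differentiate the reflection formula rGamma w * rGamma (1 - w) = sin (pi w) / pi.\<close>
  have "((\<lambda>w. rGamma w * rGamma (1 - w)) has_field_derivative
      rGamma z * rGamma (1 - z) * (Digamma (1 - z) - Digamma z)) (at z)"
  proof -
    have "((\<lambda>w. rGamma (1 - w)) has_field_derivative (-rGamma (1 - z) * Digamma (1 - z)) * (-1)) (at z)"
      by (rule DERIV_chain2[where f = rGamma and g = "\<lambda>w. 1 - w"])
        (use has_field_derivative_rGamma_no_nonpos_int[OF z2] in \<open>auto intro!: derivative_eq_intros\<close>)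
    from DERIV_mult[OF has_field_derivative_rGamma_no_nonpos_int[OF z1] this] show ?thesis
      by (rule DERIV_cong) (simp add: algebra_simps)
  qed
  moreover have "((\<lambda>w. rGamma w * rGamma (1 - w)) has_field_derivative cos (of_real pi * z)) (at z)"
    unfolding rGamma_reflection_complex by (auto intro!: derivative_eq_intros)
  ultimately have "sin (of_real pi * z) / of_real pi * (Digamma (1 - z) - Digamma z) = cos (of_real pi * z)"
    by (simp add: DERIV_unique rGamma_reflection_complex)
  moreover have "sin (of_real pi * z) \<noteq> 0"
    using z by (auto simp: sin_eq_0)
  ultimately show ?thesis by (simp add: cot_def field_simps)
qed

lemma Digamma_diff_sums:
  fixes z :: complex
  assumes z: "z \<notin> \<int>"
  shows "(\<lambda>n. inverse (z + of_nat (Suc n)) - inverse (of_nat (Suc n) - z))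
           sums (Digamma (1 - z) - Digamma z - inverse z)"
proof -
  have z0: "z \<noteq> 0" and z1: "1 - z \<noteq> 0"
    using z Ints_1 by (auto simp del: Ints_1)
  have "(\<lambda>n. inverse (z + of_nat n) - inverse ((1 - z) + of_nat n)) sums (Digamma (1 - z) - Digamma z)"
  proof -
    have "(\<lambda>m. (of_real (ln (real m)) - (\<Sum>n<m. inverse ((1 - z) + of_nat n)))
              - (of_real (ln (real m)) - (\<Sum>n<m. inverse (z + of_nat n))))
          \<longlonglongrightarrow> Digamma (1 - z) - Digamma z"
      by (intro tendsto_diff Digamma_LIMSEQ z0 z1)
    thus ?thesis by (simp add: sums_def sum_subtractf)
  qed
  moreover have "(\<lambda>n. inverse (z + of_nat (Suc n)) - inverse (z + of_nat n)) sums (0 - inverse (z + of_nat 0))"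
    by (intro telescope_sums[OF filterlim_compose[OF tendsto_inverse_0]]
              tendsto_add_filterlim_at_infinity[OF tendsto_const] tendsto_of_nat)
  ultimately have "(\<lambda>n. (inverse (z + of_nat n) - inverse ((1 - z) + of_nat n))
                      + (inverse (z + of_nat (Suc n)) - inverse (z + of_nat n)))
                   sums (Digamma (1 - z) - Digamma z + (0 - inverse (z + of_nat 0)))"
    by (rule sums_add)
  moreover have "(1 - z) + of_nat n = of_nat (Suc n) - z" for n
    by simp
  ultimately show ?thesis
    by (simp del: of_nat_Suc)
qed

lemma cot_i_times_of_real:
  fixes t :: real
  assumes t: "t \<noteq> 0"
  shows "cot (\<i> * complex_of_real t) = - \<i> * complex_of_real ((exp (2 * t) + 1) / (exp (2 * t) - 1))"
proof -
  have cos: "cos (\<i> * complex_of_real t) = complex_of_real ((exp t + inverse (exp t)) / 2)"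
    by (rule cosh_real[symmetric])
  have sin: "sin (\<i> * complex_of_real t) = \<i> * complex_of_real ((exp t - inverse (exp t)) / 2)"
    unfolding sin_i_times by (simp add: exp_of_real)
  have "exp t * exp t \<noteq> 1"
    using t by (simp flip: exp_add)
  hence ne: "exp t - inverse (exp t) \<noteq> 0" and
    quot: "(exp t + inverse (exp t)) / 2 / ((exp t - inverse (exp t)) / 2) = (exp t ^ 2 + 1) / (exp t ^ 2 - 1)"
    by (simp_all add: field_simps power2_eq_square)
  have div: "b \<noteq> 0 \<Longrightarrow> complex_of_real a / (\<i> * complex_of_real b) = - \<i> * complex_of_real (a / b)"
    for a b by (simp add: field_simps)
  have "cot (\<i> * complex_of_real t)
      = - \<i> * complex_of_real ((exp t + inverse (exp t)) / 2 / ((exp t - inverse (exp t)) / 2))"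
    unfolding cot_def cos sin by (rule div) (use ne in simp)
  thus ?thesis unfolding quot exp_double .
qed

lemma imaginary_not_Ints: "x \<noteq> 0 \<Longrightarrow> \<i> * complex_of_real x \<notin> \<int>"
  by (auto elim!: Ints_cases simp: complex_eq_iff)

lemma Digamma_reflection_imaginary:
  fixes x :: real
  assumes x: "x > 0"
  defines "z \<equiv> \<i> * complex_of_real x"
  shows "Digamma (1 - z) - Digamma z - inverse z
           = complex_of_real (pi / (exp (2 * pi * x) - 1) - 1 / (2 * x) + pi / 2) * (-2 * \<i>)"
proof -
  define R where "R = (exp (2 * (pi * x)) + 1) / (exp (2 * (pi * x)) - 1)"
  have z: "z \<notin> \<int>"
    unfolding z_def using x by (intro imaginary_not_Ints) simp
  have pi_z: "complex_of_real pi * z = \<i> * complex_of_real (pi * x)"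
    by (simp add: z_def)
  have "pi * x \<noteq> 0" using x by simp
  have "Digamma (1 - z) - Digamma z - inverse z
      = complex_of_real pi * (- \<i> * complex_of_real R) - inverse (\<i> * complex_of_real x)"
    unfolding Digamma_reflection_complex[OF z] pi_z
      cot_i_times_of_real[OF \<open>pi * x \<noteq> 0\<close>] R_def
    using x by (simp add: z_def)
  also have "\<dots> = complex_of_real ((pi * R - 1 / x) / 2) * (-2 * \<i>)"
    using x by (simp add: field_simps)
  also have "(pi * R - 1 / x) / 2 = pi / (exp (2 * pi * x) - 1) - 1 / (2 * x) + pi / 2"
  proof -
    have "exp (2 * (pi * x)) - 1 > 0" using x by simp
    thus ?thesis
      unfolding R_def using x by (simp add: field_simps)
  qed
  finally show ?thesis .
qed

lemma coth_partial_fractions: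
  fixes x :: real
  assumes x: "x > 0"
  shows "(\<lambda>k. x / (x^2 + (real (Suc k))^2)) sums (pi / (exp (2 * pi * x) - 1) - 1 / (2 * x) + pi / 2)"
proof -
  define z where "z = \<i> * complex_of_real x"
  have z: "z \<notin> \<int>"
    unfolding z_def using x by (intro imaginary_not_Ints) simp
  have term_eq: "inverse (z + of_nat (Suc n)) - inverse (of_nat (Suc n) - z)
      = complex_of_real (x / (x^2 + (real (Suc n))^2)) * (-2 * \<i>)" for n
  proof -
    have "z + of_nat (Suc n) \<noteq> 0" "of_nat (Suc n) - z \<noteq> 0"
      using x by (auto simp: complex_eq_iff z_def)
    moreover have "(z + of_nat (Suc n)) * (of_nat (Suc n) - z) = complex_of_real (x^2 + (real (Suc n))^2)"
      by (simp add: z_def algebra_simps power2_eq_square)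
    moreover have "complex_of_real (x^2 + (real (Suc n))^2) \<noteq> 0"
      by (simp only: of_real_eq_0_iff) (simp add: add_nonneg_pos)
    ultimately show ?thesis by (simp add: field_simps z_def)
  qed
  have "(\<lambda>k. complex_of_real (x / (x^2 + (real (Suc k))^2)) * (-2 * \<i>))
      sums (complex_of_real (pi / (exp (2 * pi * x) - 1) - 1 / (2 * x) + pi / 2) * (-2 * \<i>))"
    using Digamma_diff_sums[OF z] by (simp only: term_eq Digamma_reflection_imaginary[OF x, folded z_def])
  hence "(\<lambda>k. complex_of_real (x / (x^2 + (real (Suc k))^2)))
      sums complex_of_real (pi / (exp (2 * pi * x) - 1) - 1 / (2 * x) + pi / 2)"
    by (subst (asm) sums_mult2_iff) simp_all
  thus ?thesis by (simp only: sums_of_real_iff)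
qed

section \<open>Tails of the series of 1 / (a^2 + k^2)\<close>

lemma arctan_scaled_increment_bounds:
  fixes a t :: real
  assumes a: "a > 0" and t: "t \<ge> 0"
  shows "1 / (a^2 + (t + 1)^2) \<le> arctan ((t + 1) / a) / a - arctan (t / a) / a"
    and "arctan ((t + 1) / a) / a - arctan (t / a) / a \<le> 1 / (a^2 + t^2)"
proof -
  have "DERIV (\<lambda>s. arctan (s / a) / a) s :> 1 / (a^2 + s^2)" for s
  proof -
    have "DERIV (\<lambda>s. arctan (s / a) / a) s :> inverse (1 + (s / a)^2) * (1 / a) / a"
      using a by (auto intro!: derivative_eq_intros)
    moreover have "inverse (1 + (s / a)^2) * (1 / a) / a = 1 / (a^2 + s^2)"
    proof -
      have "a * (a * a + s * s) > 0" using a by (simp add: add_pos_nonneg)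
      thus ?thesis using a by (simp add: field_simps power2_eq_square)
    qed
    ultimately show ?thesis by simp
  qed
  then obtain s where s: "t < s" "s < t + 1"
    and mvt: "arctan ((t + 1) / a) / a - arctan (t / a) / a = (t + 1 - t) * (1 / (a^2 + s^2))"
    using MVT2[of t "t + 1" "\<lambda>s. arctan (s / a) / a" "\<lambda>s. 1 / (a^2 + s^2)"] by auto
  have "t^2 \<le> s^2" "s^2 \<le> (t + 1)^2"
    using s t by (auto intro: power_mono)
  moreover have "a^2 + t^2 > 0" using a by (simp add: add_pos_nonneg)
  ultimately show "1 / (a^2 + (t + 1)^2) \<le> arctan ((t + 1) / a) / a - arctan (t / a) / a"
    and "arctan ((t + 1) / a) / a - arctan (t / a) / a \<le> 1 / (a^2 + t^2)"
    unfolding mvt using a by (auto intro!: divide_left_mono mult_pos_pos add_pos_nonneg)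
qed

lemma arctan_tail_bounds:
  fixes a :: real and M :: nat
  assumes a: "a > 0" and M: "M > 0"
  shows "summable (\<lambda>k. 1 / (a^2 + (real (Suc (k + M)))^2))"
    and "(\<Sum>k. 1 / (a^2 + (real (Suc (k + M)))^2)) \<le> arctan (a / M) / a"
    and "arctan (a / M) / a - 1 / (a^2 + (real M)^2) \<le> (\<Sum>k. 1 / (a^2 + (real (Suc (k + M)))^2))"
proof -
  define F where "F t = arctan (t / a) / a" for t
  have "(\<lambda>k. F (real (k + M))) \<longlonglongrightarrow> pi / 2 / a"
  proof -
    have "filterlim (\<lambda>k. real (k + M)) at_top sequentially"
      by (rule filterlim_compose[OF filterlim_real_sequentially filterlim_add_const_nat_at_top])
    hence "filterlim (\<lambda>k. inverse a * real (k + M)) at_top sequentially"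
      using a by (intro filterlim_tendsto_pos_mult_at_top[OF tendsto_const]) auto
    from filterlim_compose[OF tendsto_arctan_at_top this] show ?thesis
      unfolding F_def by (intro tendsto_divide) (use a in \<open>simp_all add: field_simps\<close>)
  qed
  from telescope_sums[OF this]
  have "(\<lambda>k. F (real (Suc k + M)) - F (real (k + M))) sums (pi / 2 / a - F (real M))"
    by simp
  moreover have "pi / 2 / a - F (real M) = arctan (a / M) / a"
    using arctan_inverse[of "M / a"] a M by (simp add: F_def diff_divide_distrib)
  ultimately have tel: "(\<lambda>k. F (real (Suc k + M)) - F (real (k + M))) sums (arctan (a / M) / a)"
    by simp
  have up: "1 / (a^2 + (real (Suc (k + M)))^2) \<le> F (real (Suc k + M)) - F (real (k + M))" for k
    using arctan_scaled_increment_bounds(1)[OF a, of "real (k + M)"] by (simp add: F_def add_ac)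
  have lo: "F (real (Suc k + M)) - F (real (k + M)) \<le> 1 / (a^2 + (real (k + M))^2)" for k
    using arctan_scaled_increment_bounds(2)[OF a, of "real (k + M)"] by (simp add: F_def add_ac)
  show summable: "summable (\<lambda>k. 1 / (a^2 + (real (Suc (k + M)))^2))"
    by (rule summable_comparison_test'[OF sums_summable[OF tel], of 0]) (use up in auto)
  show "(\<Sum>k. 1 / (a^2 + (real (Suc (k + M)))^2)) \<le> arctan (a / M) / a"
    using suminf_le[OF up summable sums_summable[OF tel]] tel by (simp add: sums_iff)
  have "(\<lambda>k. 1 / (a^2 + (real (k + M))^2))
      sums ((\<Sum>k. 1 / (a^2 + (real (Suc (k + M)))^2)) + 1 / (a^2 + (real M)^2))"
    using sums_Suc_iff[where f = "\<lambda>k. 1 / (a^2 + (real (k + M))^2)"] summable_sums[OF summable] by simp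
  from sums_le[OF lo tel this]
  show "arctan (a / M) / a - 1 / (a^2 + (real M)^2) \<le> (\<Sum>k. 1 / (a^2 + (real (Suc (k + M)))^2))"
    by simp
qed

section \<open>A Riemann sum for arctan t / t\<close>

lemma riemann_sum_antimono_bounds:
  fixes h :: "real \<Rightarrow> real" and N :: nat
  assumes cont: "continuous_on {0..1} h"
    and antimono: "\<And>s t. 0 \<le> s \<Longrightarrow> s \<le> t \<Longrightarrow> t \<le> 1 \<Longrightarrow> h t \<le> h s"
    and N: "N > 0"
  shows "(\<Sum>n<N. h (real (Suc n) / N)) / N \<le> integral {0..1} h"
    and "integral {0..1} h \<le> (\<Sum>n<N. h (real (Suc n) / N)) / N + (h 0 - h 1) / N"
proof -
  have integrable: "h integrable_on {a..b}" if "0 \<le> a" "b \<le> 1" for a b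
    by (rule integrable_subinterval_real[OF integrable_continuous_interval[OF cont]]) (use that in auto)
  have cell: "h (real (Suc m) / N) / N \<le> integral {real m / N..real (Suc m) / N} h \<and>
      integral {real m / N..real (Suc m) / N} h \<le> h (real m / N) / N" if m: "m < N" for m
  proof -
    let ?I = "{real m / N..real (Suc m) / N}"
    have le: "real m / N \<le> real (Suc m) / N" and le1: "real (Suc m) / N \<le> 1"
      using m N by (simp_all add: divide_right_mono)
    have const: "integral ?I (\<lambda>x. c) = c / N" for c
      using le N by (simp add: field_simps)
    have hI: "h integrable_on ?I"
      using integrable[of "real m / N" "real (Suc m) / N"] le1 by simp
    have "h (real (Suc m) / N) \<le> h x" "h x \<le> h (real m / N)" if "x \<in> ?I" for x
      using that le1 by (auto intro!: antimono intro: order.trans[of 0 "real m / N"])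
    hence "integral ?I (\<lambda>x. h (real (Suc m) / N)) \<le> integral ?I h \<and> integral ?I h \<le> integral ?I (\<lambda>x. h (real m / N))"
      using hI by (intro conjI integral_le) auto
    thus ?thesis unfolding const .
  qed
  have partial: "(\<Sum>n<m. h (real (Suc n) / N)) / N \<le> integral {0..real m / N} h \<and>
      integral {0..real m / N} h \<le> (\<Sum>n<m. h (real n / N)) / N" if "m \<le> N" for m
    using that
  proof (induction m)
    case (Suc m)
    hence m: "m < N" by simp
    have "integral {0..real m / N} h + integral {real m / N..real (Suc m) / N} h = integral {0..real (Suc m) / N} h"
      by (rule Henstock_Kurzweil_Integration.integral_combine) (use m N in \<open>auto simp: divide_right_mono intro!: integrable\<close>)
    thus ?case using Suc cell[OF m] by (simp add: add_divide_distrib)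
  qed simp
  from partial[of N] N show "(\<Sum>n<N. h (real (Suc n) / N)) / N \<le> integral {0..1} h"
    by simp
  obtain k where k: "N = Suc k" using N not0_implies_Suc by blast
  have "(\<Sum>n<N. h (real n / N)) = (\<Sum>n<N. h (real (Suc n) / N)) + (h 0 - h 1)"
    unfolding k by (subst sum.lessThan_Suc_shift, subst sum.lessThan_Suc) simp
  with partial[of N] N show "integral {0..1} h \<le> (\<Sum>n<N. h (real (Suc n) / N)) / N + (h 0 - h 1) / N"
    by (simp add: add_divide_distrib)
qed

definition arctan_sinc :: "real \<Rightarrow> real" where
  "arctan_sinc t = (if t = 0 then 1 else arctan t / t)"

lemma arctan_sinc_antimono: "0 \<le> s \<Longrightarrow> s \<le> t \<Longrightarrow> arctan_sinc t \<le> arctan_sinc s"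
  by (cases "s = 0") (auto simp: arctan_sinc_def arctan_le_self arctan_divide_mono)

lemma continuous_on_arctan_sinc: "continuous_on {0..1} arctan_sinc"
  unfolding continuous_on_eq_continuous_within
proof
  fix x :: real
  assume "x \<in> {0..1}"
  then consider "x > 0" | "x = 0" by fastforce
  thus "continuous (at x within {0..1}) arctan_sinc"
  proof cases
    case 1
    have "eventually (\<lambda>y. arctan y / y = arctan_sinc y) (nhds x)"
      using eventually_nhds_in_open[of "{0<..}" x] 1 by (auto elim!: eventually_mono simp: arctan_sinc_def)
    moreover have "isCont (\<lambda>y. arctan y / y) x"
      using 1 by (intro continuous_intros) auto
    ultimately have "isCont arctan_sinc x" by (subst isCont_cong[symmetric])
    thus ?thesis by (rule continuous_at_imp_continuous_within)
  next
    case 2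
    have "((\<lambda>y. arctan y / y) \<longlongrightarrow> 1) (at 0)"
      using DERIV_arctan[of 0] by (simp add: has_field_derivative_iff)
    hence "((\<lambda>y. arctan y / y) \<longlongrightarrow> 1) (at 0 within {0..1})"
      by (rule tendsto_within_subset) simp
    moreover have "eventually (\<lambda>y. arctan y / y = arctan_sinc y) (at 0 within {0..1})"
      unfolding eventually_at_filter by (simp add: arctan_sinc_def)
    ultimately have "(arctan_sinc \<longlongrightarrow> 1) (at 0 within {0..1})"
      by (rule Lim_transform_eventually)
    thus ?thesis using 2 by (simp add: continuous_within arctan_sinc_def)
  qed
qed

text \<open>This integral is Catalan's constant. Its value is never needed: it only appears as the
  common limit of two tails of lattice sums, which cancel.\<close>

definition catalan :: real where
  "catalan = integral {0..1} arctan_sinc"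

lemma arctan_riemann_sum_approx:
  assumes N: "N > 0"
  shows "\<bar>(\<Sum>n<N. arctan (real (Suc n) / N) / real (Suc n)) - catalan\<bar> \<le> 1 / N"
proof -
  have "(\<Sum>n<N. arctan_sinc (real (Suc n) / N)) / N = (\<Sum>n<N. arctan (real (Suc n) / N) / real (Suc n))"
    using N by (simp add: arctan_sinc_def sum_divide_distrib field_simps del: of_nat_Suc)
  moreover have "(arctan_sinc 0 - arctan_sinc 1) / N \<le> 1 / N"
    using N by (intro divide_right_mono) (simp_all add: arctan_sinc_def)
  ultimately show ?thesis
    using riemann_sum_antimono_bounds[OF continuous_on_arctan_sinc arctan_sinc_antimono N]
    unfolding catalan_def by linarith
qed

lemma arctan_riemann_sum_tendsto:
  "(\<lambda>N. \<Sum>n<N. arctan (real (Suc n) / N) / real (Suc n)) \<longlonglongrightarrow> catalan"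
proof -
  have "eventually (\<lambda>N. norm ((\<Sum>n<N. arctan (real (Suc n) / N) / real (Suc n)) - catalan) \<le> 1 / N)
      sequentially"
    using eventually_gt_at_top[of 0] by eventually_elim (use arctan_riemann_sum_approx in auto)
  hence "(\<lambda>N. (\<Sum>n<N. arctan (real (Suc n) / N) / real (Suc n)) - catalan) \<longlonglongrightarrow> 0"
    by (rule Lim_null_comparison[OF _ lim_inverse_n'])
  thus ?thesis by (simp add: LIM_zero_iff)
qed

lemma abs_arctan_diff_le: "\<bar>arctan u - arctan v\<bar> \<le> \<bar>u - v\<bar>"
proof -
  have "arctan b - arctan a \<le> b - a" if ab: "a < b" for a b
  proof -
    obtain s where "arctan b - arctan a = (b - a) * inverse (1 + s^2)"
      using MVT2[OF ab, of arctan "\<lambda>s. inverse (1 + s^2)"] DERIV_arctan by blast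
    moreover have "inverse (1 + s^2) \<le> 1" by (simp add: inverse_le_1_iff)
    ultimately show ?thesis
      using ab mult_left_mono[of "inverse (1 + s^2)" 1 "b - a"] by simp
  qed
  thus ?thesis
    using arctan_less_iff[of u v] arctan_less_iff[of v u]
    by (cases u v rule: linorder_cases) (fastforce simp: abs_if)+
qed

lemma arctan_riemann_sum_rescale_le:
  assumes N: "N > 0"
  shows "\<bar>(\<Sum>n<N. arctan (r * real (Suc n) / N) / real (Suc n))
          - (\<Sum>n<N. arctan (real (Suc n) / N) / real (Suc n))\<bar> \<le> \<bar>r - 1\<bar>"
proof -
  have "\<bar>arctan (r * real (Suc n) / N) / real (Suc n) - arctan (real (Suc n) / N) / real (Suc n)\<bar>
      \<le> \<bar>r - 1\<bar> / N" for n
  proof -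
    have "r * real (Suc n) / N - real (Suc n) / N = (r - 1) * (real (Suc n) / N)"
      by (simp add: algebra_simps diff_divide_distrib)
    hence "\<bar>arctan (r * real (Suc n) / N) - arctan (real (Suc n) / N)\<bar> \<le> \<bar>r - 1\<bar> * real (Suc n) / N"
      using abs_arctan_diff_le[of "r * real (Suc n) / N" "real (Suc n) / N"] by (simp add: abs_mult)
    from divide_right_mono[OF this, of "real (Suc n)"] show ?thesis
      by (simp flip: diff_divide_distrib)
  qed
  hence "\<bar>\<Sum>n<N. arctan (r * real (Suc n) / N) / real (Suc n) - arctan (real (Suc n) / N) / real (Suc n)\<bar>
      \<le> (\<Sum>n<N. \<bar>r - 1\<bar> / N)"
    by (intro order_trans[OF sum_abs] sum_mono)
  also have "\<dots> = \<bar>r - 1\<bar>" using N by simp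
  finally show ?thesis by (simp add: sum_subtractf)
qed

lemma arctan_riemann_sum_rescale_tendsto:
  assumes P: "filterlim P at_top sequentially" and r: "r \<longlonglongrightarrow> 1"
  shows "(\<lambda>N. \<Sum>n<P N. arctan (r N * real (Suc n) / P N) / real (Suc n)) \<longlonglongrightarrow> catalan"
proof -
  have "(\<lambda>N. (\<Sum>n<P N. arctan (r N * real (Suc n) / P N) / real (Suc n))
      - (\<Sum>n<P N. arctan (real (Suc n) / P N) / real (Suc n))) \<longlonglongrightarrow> 0"
  proof (rule Lim_null_comparison)
    show "(\<lambda>N. \<bar>r N - 1\<bar>) \<longlonglongrightarrow> 0"
      using tendsto_rabs[OF tendsto_diff[OF r tendsto_const[of 1]]] by simp
    have "eventually (\<lambda>N. P N \<ge> 1) sequentially"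
      using P by (simp add: filterlim_at_top)
    hence "eventually (\<lambda>N. P N > 0) sequentially"
      by eventually_elim simp
    thus "eventually (\<lambda>N. norm ((\<Sum>n<P N. arctan (r N * real (Suc n) / P N) / real (Suc n))
        - (\<Sum>n<P N. arctan (real (Suc n) / P N) / real (Suc n))) \<le> \<bar>r N - 1\<bar>) sequentially"
      by eventually_elim (use arctan_riemann_sum_rescale_le in \<open>simp only: real_norm_def\<close>)
  qed
  from tendsto_add[OF this filterlim_compose[OF arctan_riemann_sum_tendsto P]] show ?thesis
    by simp
qed

section \<open>The transformation law of the eta series\<close>

text \<open>Indices are shifted: n and k stand for n + 1 and k + 1. The series
  S(y) = (\<Sum>n. eta_term y n) equals - ln (\<Prod>n\<ge>1. 1 - exp (- 2 pi n y)) = - ln \<eta>(i y) - pi y / 12.\<close>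

definition eta_term :: "real \<Rightarrow> nat \<Rightarrow> real" where
  "eta_term y n = 1 / (real (Suc n) * (exp (2 * pi * real (Suc n) * y) - 1))"

definition lattice_term :: "real \<Rightarrow> nat \<Rightarrow> nat \<Rightarrow> real" where
  "lattice_term y n k = y / ((real (Suc n) * y)^2 + (real (Suc k))^2)"

definition lattice_tail :: "real \<Rightarrow> nat \<Rightarrow> nat \<Rightarrow> real" where
  "lattice_tail y N M = (\<Sum>n<N. \<Sum>j. lattice_term y n (j + M))"

lemma lattice_term_inverse:
  assumes y: "y > 0"
  shows "lattice_term (1 / y) k n = lattice_term y n k"
proof -
  have "(real (Suc k) / y)^2 + (real (Suc n))^2 = ((real (Suc n) * y)^2 + (real (Suc k))^2) / y^2"
    using assms by (simp add: field_simps power2_eq_square)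
  moreover have "(real (Suc n) * y)^2 + (real (Suc k))^2 > 0"
    by (intro add_nonneg_pos) auto
  ultimately show ?thesis
    using assms by (simp add: lattice_term_def field_simps power2_eq_square)
qed

lemma lattice_term_sums:
  assumes y: "y > 0"
  shows "(\<lambda>k. lattice_term y n k)
           sums (pi * eta_term y n - 1 / (2 * (real (Suc n))^2 * y) + pi / (2 * real (Suc n)))"
proof -
  have x: "real (Suc n) * y > 0" using y by simp
  from sums_divide[OF coth_partial_fractions[OF x], of "real (Suc n)"]
  have "(\<lambda>k. lattice_term y n k)
      sums ((pi / (exp (2 * pi * (real (Suc n) * y)) - 1) - 1 / (2 * (real (Suc n) * y)) + pi / 2) / real (Suc n))"
    by (simp add: lattice_term_def del: of_nat_Suc)
  moreover have "(pi / (exp (2 * pi * (real (Suc n) * y)) - 1) - 1 / (2 * (real (Suc n) * y)) + pi / 2) / real (Suc n)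
      = pi * eta_term y n - 1 / (2 * (real (Suc n))^2 * y) + pi / (2 * real (Suc n))"
  proof -
    define D where "D = exp (2 * pi * real (Suc n) * y) - 1"
    have "D > 0" using y by (simp add: D_def)
    moreover have "exp (2 * pi * (real (Suc n) * y)) - 1 = D" by (simp add: D_def mult.assoc)
    moreover have "D > 0 \<Longrightarrow> K > 0 \<Longrightarrow>
        (pi / D - 1 / (2 * (K * y)) + pi / 2) / K = pi * (1 / (K * D)) - 1 / (2 * K^2 * y) + pi / (2 * K)"
      for K using y by (simp add: field_simps power2_eq_square)
    ultimately show ?thesis
      unfolding eta_term_def D_def[symmetric] by simp
  qed
  ultimately show ?thesis by simp
qed

lemma summable_eta_term:
  assumes y: "y > 0"
  shows "summable (eta_term y)"
proof (rule summable_comparison_test')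
  show "summable (\<lambda>n. 1 / (2 * pi * y) * (1 / (real n + 1)^2))"
    using sums_summable[OF inverse_squares_sums] by (intro summable_mult) (simp add: add.commute)
  fix n
  have t: "2 * pi * real (Suc n) * y > 0" using y by simp
  have e: "exp (2 * pi * real (Suc n) * y) - 1 \<ge> 2 * pi * real (Suc n) * y"
    using exp_ge_add_one_self[of "2 * pi * real (Suc n) * y"] by linarith
  have "eta_term y n \<le> 1 / (real (Suc n) * (2 * pi * real (Suc n) * y))"
    unfolding eta_term_def using t e y by (intro divide_left_mono mult_left_mono mult_pos_pos) auto
  also have "\<dots> = 1 / (2 * pi * y) * (1 / (real n + 1)^2)"
    by (simp add: field_simps power2_eq_square)
  finally show "norm (eta_term y n) \<le> 1 / (2 * pi * y) * (1 / (real n + 1)^2)"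
    using t by (simp add: eta_term_def)
qed

lemma eta_partial_sum_split:
  assumes y: "y > 0"
  shows "(\<Sum>n<N. eta_term y n) = (1 / pi) * (lattice_tail y N M + (\<Sum>n<N. \<Sum>k<M. lattice_term y n k))
           + (1 / (2 * pi * y)) * (\<Sum>n<N. 1 / (real (Suc n))^2) - harm N / 2"
proof -
  have "eta_term y n = (1 / pi) * ((\<Sum>j. lattice_term y n (j + M)) + (\<Sum>k<M. lattice_term y n k))
      + (1 / (2 * pi * y)) * (1 / (real (Suc n))^2) - inverse (real (Suc n)) / 2" for n
  proof -
    have "(\<Sum>k. lattice_term y n k) = (\<Sum>j. lattice_term y n (j + M)) + (\<Sum>k<M. lattice_term y n k)"
      by (rule suminf_split_initial_segment[OF sums_summable[OF lattice_term_sums[OF y]]])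
    moreover have "(\<Sum>k. lattice_term y n k)
        = pi * eta_term y n - 1 / (2 * (real (Suc n))^2 * y) + pi / (2 * real (Suc n))"
      by (rule sums_unique[OF lattice_term_sums[OF y], symmetric])
    moreover have "pi * e = S + 1 / (2 * K^2 * y) - pi / (2 * K) \<Longrightarrow> K > 0
        \<Longrightarrow> e = (1 / pi) * S + (1 / (2 * pi * y)) * (1 / K^2) - inverse K / 2" for e S K :: real
      using y by (simp add: field_simps power2_eq_square)
    ultimately show ?thesis
      by simp
  qed
  thus ?thesis
    by (simp add: lattice_tail_def harm_altdef sum.distrib sum_subtractf sum_distrib_left
        add_divide_distrib sum_divide_distrib del: of_nat_Suc)
qed

lemma eta_partial_sums_diff:
  assumes y: "y > 0"
  shows "(\<Sum>n<N. eta_term y n) - (\<Sum>k<M. eta_term (1 / y) k)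
           = (1 / pi) * (lattice_tail y N M - lattice_tail (1 / y) M N)
             + (1 / (2 * pi * y)) * (\<Sum>n<N. 1 / (real (Suc n))^2)
             - (y / (2 * pi)) * (\<Sum>k<M. 1 / (real (Suc k))^2) + (harm M - harm N) / 2"
proof -
  have "(\<Sum>k<M. \<Sum>n<N. lattice_term (1 / y) k n) = (\<Sum>n<N. \<Sum>k<M. lattice_term y n k)"
    by (simp add: lattice_term_inverse[OF y] sum.swap[of _ "{..<M}"])
  thus ?thesis
    unfolding eta_partial_sum_split[OF y, of N M] eta_partial_sum_split[of "1 / y" M N, simplified, OF y]
    by (simp add: field_simps)
qed

lemma lattice_tail_bounds:
  assumes y: "y > 0" and M: "M > 0"
  shows "lattice_tail y N M \<le> (\<Sum>n<N. arctan (real (Suc n) * y / M) / real (Suc n))"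
    and "(\<Sum>n<N. arctan (real (Suc n) * y / M) / real (Suc n)) - real N * y / (real M)^2 \<le> lattice_tail y N M"
proof -
  have row: "(\<Sum>j. lattice_term y n (j + M)) \<le> arctan (real (Suc n) * y / M) / real (Suc n) \<and>
     arctan (real (Suc n) * y / M) / real (Suc n) - y / (real M)^2 \<le> (\<Sum>j. lattice_term y n (j + M))" for n
  proof -
    define a where "a = real (Suc n) * y"
    have a: "a > 0" using y by (simp add: a_def)
    note tail = arctan_tail_bounds[OF a M]
    have row_eq: "(\<Sum>j. lattice_term y n (j + M)) = y * (\<Sum>j. 1 / (a^2 + (real (Suc (j + M)))^2))"
      unfolding suminf_mult[OF tail(1), symmetric] by (simp add: lattice_term_def a_def)
    have scale: "y * (arctan (a / M) / a) = arctan (real (Suc n) * y / M) / real (Suc n)"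
      using y by (simp add: a_def)
    have "y * (1 / (a^2 + (real M)^2)) \<le> y / (real M)^2"
      using y M by (simp add: frac_le add_pos_nonneg)
    moreover have "y * (arctan (a / M) / a - 1 / (a^2 + (real M)^2)) \<le> (\<Sum>j. lattice_term y n (j + M))"
      unfolding row_eq using tail(3) y by (intro mult_left_mono) auto
    moreover have "(\<Sum>j. lattice_term y n (j + M)) \<le> y * (arctan (a / M) / a)"
      unfolding row_eq using tail(2) y by (intro mult_left_mono) auto
    ultimately show ?thesis
      using scale by (simp only: right_diff_distrib) auto
  qed
  show "lattice_tail y N M \<le> (\<Sum>n<N. arctan (real (Suc n) * y / M) / real (Suc n))"
    unfolding lattice_tail_def by (rule sum_mono) (use row in blast)
  have "(\<Sum>n<N. arctan (real (Suc n) * y / M) / real (Suc n) - y / (real M)^2) \<le> lattice_tail y N M"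
    unfolding lattice_tail_def by (rule sum_mono) (use row in blast)
  thus "(\<Sum>n<N. arctan (real (Suc n) * y / M) / real (Suc n)) - real N * y / (real M)^2 \<le> lattice_tail y N M"
    by (simp add: sum_subtractf)
qed

lemma lattice_tail_tendsto:
  assumes y: "y > 0"
    and P: "filterlim P at_top sequentially" and Q: "filterlim Q at_top sequentially"
    and ratio: "(\<lambda>N. y * P N / Q N) \<longlonglongrightarrow> 1"
  shows "(\<lambda>N. lattice_tail y (P N) (Q N)) \<longlonglongrightarrow> catalan"
proof -
  define U where "U N = (\<Sum>n<P N. arctan (real (Suc n) * y / Q N) / real (Suc n))" for N
  have pos: "eventually (\<lambda>N. P N > 0 \<and> Q N > 0) sequentially"
  proof -
    have "eventually (\<lambda>N. P N \<ge> 1) sequentially" "eventually (\<lambda>N. Q N \<ge> 1) sequentially"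
      using P Q by (simp_all add: filterlim_at_top)
    thus ?thesis by eventually_elim simp
  qed
  have "(\<lambda>N. \<Sum>n<P N. arctan (y * P N / Q N * real (Suc n) / P N) / real (Suc n)) \<longlonglongrightarrow> catalan"
    by (rule arctan_riemann_sum_rescale_tendsto[OF P ratio])
  moreover have "eventually (\<lambda>N. (\<Sum>n<P N. arctan (y * P N / Q N * real (Suc n) / P N) / real (Suc n)) = U N)
      sequentially"
    using pos
  proof eventually_elim
    case (elim N)
    hence "y * P N / Q N * real (Suc n) / P N = real (Suc n) * y / Q N" for n
      by (simp add: field_simps)
    thus ?case by (simp only: U_def)
  qed
  ultimately have U: "U \<longlonglongrightarrow> catalan"
    by (rule Lim_transform_eventually)
  have "(\<lambda>N. y * P N / Q N * (1 / Q N)) \<longlonglongrightarrow> 1 * 0"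
    by (intro tendsto_mult ratio filterlim_compose[OF lim_inverse_n' Q])
  hence "(\<lambda>N. U N - real (P N) * y / (real (Q N))^2) \<longlonglongrightarrow> catalan - 0"
    by (intro tendsto_diff U) (simp add: power2_eq_square mult.commute)
  moreover have "eventually (\<lambda>N. U N - real (P N) * y / (real (Q N))^2 \<le> lattice_tail y (P N) (Q N)) sequentially"
    "eventually (\<lambda>N. lattice_tail y (P N) (Q N) \<le> U N) sequentially"
    using pos by (eventually_elim, use lattice_tail_bounds[OF y] in \<open>simp add: U_def\<close>)+
  ultimately show ?thesis
    using tendsto_sandwich[of _ _ sequentially _ catalan] U by simp
qed

lemma harm_diff_tendsto_ln:
  assumes y: "y > 0" and M: "filterlim M at_top sequentially"
    and ratio: "(\<lambda>N. real (M N) / N) \<longlonglongrightarrow> y"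
  shows "(\<lambda>N. harm (M N) - harm N) \<longlonglongrightarrow> ln y"
proof -
  have "(\<lambda>N. (harm (M N) - ln (real (M N))) - (harm N - ln (real N)) + ln (real (M N) / N))
      \<longlonglongrightarrow> euler_mascheroni - euler_mascheroni + ln y"
    using y by (intro tendsto_intros filterlim_compose[OF euler_mascheroni_LIMSEQ M]
        euler_mascheroni_LIMSEQ ratio) simp
  moreover have "eventually (\<lambda>N. M N \<ge> 1) sequentially"
    using M by (simp add: filterlim_at_top)
  with eventually_gt_at_top[of 0] have "eventually (\<lambda>N. (harm (M N) - ln (real (M N))) - (harm N - ln (real N)) + ln (real (M N) / N)
      = harm (M N) - harm N) sequentially"
    by eventually_elim (simp add: ln_div)
  ultimately show ?thesis
    by (simp add: Lim_transform_eventually)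
qed

lemma nat_ceiling_mult_asymptotics:
  fixes y :: real
  assumes y: "y > 0"
  shows "filterlim (\<lambda>N. nat \<lceil>real N * y\<rceil>) at_top sequentially"
    and "(\<lambda>N. real (nat \<lceil>real N * y\<rceil>) / N) \<longlonglongrightarrow> y"
proof -
  have bounds: "real N * y \<le> real (nat \<lceil>real N * y\<rceil>)" "real (nat \<lceil>real N * y\<rceil>) \<le> real N * y + 1" for N
    using y ceiling_correct[of "real N * y"] by auto
  have "filterlim (\<lambda>N. real (nat \<lceil>real N * y\<rceil>)) at_top sequentially"
    by (rule filterlim_at_top_mono[OF filterlim_at_top_mult_tendsto_pos[OF tendsto_const y filterlim_real_sequentially]])
      (use bounds in auto)
  thus "filterlim (\<lambda>N. nat \<lceil>real N * y\<rceil>) at_top sequentially"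
    unfolding filterlim_at_top
  proof (intro allI)
    fix Z :: nat
    assume "\<forall>Z. eventually (\<lambda>N. Z \<le> real (nat \<lceil>real N * y\<rceil>)) sequentially"
    hence "eventually (\<lambda>N. real Z \<le> real (nat \<lceil>real N * y\<rceil>)) sequentially" ..
    thus "eventually (\<lambda>N. Z \<le> nat \<lceil>real N * y\<rceil>) sequentially"
      by (simp only: of_nat_le_iff)
  qed
  show "(\<lambda>N. real (nat \<lceil>real N * y\<rceil>) / N) \<longlonglongrightarrow> y"
  proof (rule tendsto_sandwich[of "\<lambda>N. y" _ _ "\<lambda>N. y + 1 / real N"])
    show "eventually (\<lambda>N. y \<le> real (nat \<lceil>real N * y\<rceil>) / N) sequentially"
      "eventually (\<lambda>N. real (nat \<lceil>real N * y\<rceil>) / N \<le> y + 1 / N) sequentially"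
      using eventually_gt_at_top[of 0] by (eventually_elim, use bounds in \<open>simp add: field_simps\<close>)+
    show "(\<lambda>N. y + 1 / real N) \<longlonglongrightarrow> y"
      using tendsto_add[OF tendsto_const lim_inverse_n', of y] by simp
  qed simp
qed

theorem eta_transformation:
  assumes y: "y > 0"
  shows "(\<Sum>n. eta_term y n) - (\<Sum>n. eta_term (1 / y) n) = pi / (12 * y) - pi * y / 12 + ln y / 2"
proof -
  \<comment> \<open>Truncating S(1/y) at M N, roughly N y, makes both lattice tails tend to catalan.\<close>
  define M where "M N = nat \<lceil>real N * y\<rceil>" for N
  have M: "filterlim M at_top sequentially" and ratio: "(\<lambda>N. real (M N) / N) \<longlonglongrightarrow> y"
    unfolding M_def using nat_ceiling_mult_asymptotics[OF y] by simp_all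
  have "(\<lambda>N. y / (real (M N) / N)) \<longlonglongrightarrow> y / y" "(\<lambda>N. real (M N) / N / y) \<longlonglongrightarrow> y / y"
    using y by (intro tendsto_divide ratio tendsto_const; simp)+
  hence "(\<lambda>N. y * real N / real (M N)) \<longlonglongrightarrow> 1" "(\<lambda>N. 1 / y * real (M N) / real N) \<longlonglongrightarrow> 1"
    using y by (simp_all add: mult.commute)
  hence tails: "(\<lambda>N. lattice_tail y N (M N)) \<longlonglongrightarrow> catalan" "(\<lambda>N. lattice_tail (1 / y) (M N) N) \<longlonglongrightarrow> catalan"
    using lattice_tail_tendsto[OF y filterlim_ident M] lattice_tail_tendsto[of "1 / y" M "\<lambda>N. N"] y M
    by (simp_all add: filterlim_ident)
  have basel: "(\<lambda>N. \<Sum>n<N. 1 / (real (Suc n))^2) \<longlonglongrightarrow> pi^2 / 6"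
    using inverse_squares_sums by (simp add: sums_def add.commute)
  have "(\<lambda>N. (\<Sum>n<N. eta_term y n) - (\<Sum>k<M N. eta_term (1 / y) k))
      \<longlonglongrightarrow> (\<Sum>n. eta_term y n) - (\<Sum>n. eta_term (1 / y) n)"
    using y by (intro tendsto_diff summable_LIMSEQ summable_eta_term
        filterlim_compose[OF summable_LIMSEQ[OF summable_eta_term] M]) simp_all
  moreover have "(\<lambda>N. (\<Sum>n<N. eta_term y n) - (\<Sum>k<M N. eta_term (1 / y) k))
      \<longlonglongrightarrow> (1 / pi) * (catalan - catalan) + (1 / (2 * pi * y)) * (pi^2 / 6)
          - (y / (2 * pi)) * (pi^2 / 6) + ln y / 2"
    unfolding eta_partial_sums_diff[OF y]
    by (intro tendsto_intros tails basel filterlim_compose[OF basel M] harm_diff_tendsto_ln[OF y M ratio])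
      simp
  ultimately have "(\<Sum>n. eta_term y n) - (\<Sum>n. eta_term (1 / y) n)
      = (1 / pi) * (catalan - catalan) + (1 / (2 * pi * y)) * (pi^2 / 6) - (y / (2 * pi)) * (pi^2 / 6) + ln y / 2"
    by (rule LIMSEQ_unique)
  thus ?thesis
    using y by (simp add: field_simps power2_eq_square)
qed

section \<open>The two series of the theorem\<close>

lemma eta_transformation_halving:
  assumes y: "y > 0"
  shows "((\<Sum>n. eta_term (y / 2) n) - (\<Sum>n. eta_term (2 / y) n))
           - ((\<Sum>n. eta_term y n) - (\<Sum>n. eta_term (1 / y) n))
         = pi / (12 * y) + pi * y / 24 - ln 2 / 2"
proof -
  have "1 / (y / 2) = 2 / y" "pi / (12 * (y / 2)) = pi / (6 * y)" "pi * (y / 2) / 12 = pi * y / 24"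
    "ln (y / 2) = ln y - ln 2"
    using y by (simp_all add: ln_div)
  hence half: "(\<Sum>n. eta_term (y / 2) n) - (\<Sum>n. eta_term (2 / y) n)
      = pi / (6 * y) - pi * y / 24 + (ln y - ln 2) / 2"
    using eta_transformation[of "y / 2"] y by simp
  show ?thesis
    unfolding half eta_transformation[OF y] using y by (simp add: field_simps)
qed

lemma exp_series_eq_eta_diff:
  fixes \<alpha> :: real
  assumes a: "\<alpha> > 0"
  shows "(\<Sum>n. exp (real (Suc n) * \<alpha>) / (real (Suc n) * (exp (2 * real (Suc n) * \<alpha>) - 1)))
           = (\<Sum>n. eta_term (\<alpha> / (2 * pi)) n) - (\<Sum>n. eta_term (\<alpha> / pi) n)"
proof -
  have "exp (real (Suc n) * \<alpha>) / (real (Suc n) * (exp (2 * real (Suc n) * \<alpha>) - 1))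
      = eta_term (\<alpha> / (2 * pi)) n - eta_term (\<alpha> / pi) n" for n
  proof -
    define E where "E = exp (real (Suc n) * \<alpha>)"
    have E: "E > 1" using a by (simp add: E_def)
    have exps: "exp (2 * pi * real (Suc n) * (\<alpha> / (2 * pi))) = E"
      "exp (2 * pi * real (Suc n) * (\<alpha> / pi)) = E^2" "exp (2 * real (Suc n) * \<alpha>) = E^2"
      unfolding E_def power2_eq_square by (simp_all flip: exp_add)
    have "(F - 1) / (k * (D * F)) = 1 / (k * D) - 1 / (k * (D * F))" if "D > 0" "F > 0" "k > 0"
      for D F k :: real
      using that by (simp add: field_simps)
    from this[of "E - 1" "E + 1" "real (Suc n)"]
    have "E / (real (Suc n) * ((E - 1) * (E + 1)))
        = 1 / (real (Suc n) * (E - 1)) - 1 / (real (Suc n) * ((E - 1) * (E + 1)))"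
      using E by simp
    moreover have "(E - 1) * (E + 1) = E^2 - 1"
      by (simp add: algebra_simps power2_eq_square)
    ultimately show ?thesis
      unfolding eta_term_def exps E_def[symmetric] by simp
  qed
  moreover have "summable (eta_term (\<alpha> / (2 * pi)))" "summable (eta_term (\<alpha> / pi))"
    using a by (simp_all add: summable_eta_term)
  ultimately show ?thesis
    by (simp add: suminf_diff)
qed

lemma alternating_series_eq_eta_diff:
  fixes \<beta> :: real
  assumes b: "\<beta> > 0"
  shows "(\<Sum>n. (-1) ^ Suc n / (real (Suc n) * (exp (2 * real (Suc n) * \<beta>) - 1)))
           = (\<Sum>n. eta_term (2 * \<beta> / pi) n) - (\<Sum>n. eta_term (\<beta> / pi) n)"
proof -
  let ?c = "eta_term (\<beta> / pi)"
  \<comment> \<open>even_part n keeps the terms with Suc n even; for Suc n = 2 (j + 1) they are halves of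
    the terms of the series at 2 \<beta> / pi.\<close>
  define even_part where "even_part n = (if even n then 0 else ?c n)" for n
  have c: "?c n = 1 / (real (Suc n) * (exp (2 * real (Suc n) * \<beta>) - 1))" for n
    by (simp add: eta_term_def)
  have odd_term: "?c (2 * j + 1) = eta_term (2 * \<beta> / pi) j / 2" for j
  proof -
    have "exp (2 * pi * real (Suc j) * (2 * \<beta> / pi)) = exp (2 * real (Suc (2 * j + 1)) * \<beta>)"
      by (simp add: field_simps)
    thus ?thesis unfolding c eta_term_def by (simp add: field_simps)
  qed
  have "even_part n = (if even n then 0 else eta_term (2 * \<beta> / pi) ((n - 1) div 2) / 2)" for n
  proof (cases "even n")
    case False
    then obtain j where "n = 2 * j + 1" by (rule oddE)
    thus ?thesis using odd_term[of j] by (simp add: even_part_def)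
  qed (simp add: even_part_def)
  hence even_part_eq: "even_part = (\<lambda>n. if even n then 0 else eta_term (2 * \<beta> / pi) ((n - 1) div 2) / 2)" ..
  have "(\<lambda>j. eta_term (2 * \<beta> / pi) j / 2) sums ((\<Sum>j. eta_term (2 * \<beta> / pi) j) / 2)"
    using b by (intro sums_divide summable_sums summable_eta_term) simp
  hence "even_part sums ((\<Sum>j. eta_term (2 * \<beta> / pi) j) / 2)"
    unfolding even_part_eq by (rule sums_if')
  hence "(\<lambda>n. 2 * even_part n - ?c n) sums (2 * ((\<Sum>j. eta_term (2 * \<beta> / pi) j) / 2) - (\<Sum>n. ?c n))"
    using b by (intro sums_diff sums_mult summable_sums summable_eta_term) simp_all
  moreover have "(-1) ^ Suc n / (real (Suc n) * (exp (2 * real (Suc n) * \<beta>) - 1)) = 2 * even_part n - ?c n" for n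
    by (cases "even n") (auto simp: even_part_def c)
  ultimately show ?thesis
    by (simp add: sums_iff)
qed

theorem corollary1p12:
  fixes \<alpha> \<beta> :: real
  assumes "\<alpha> > 0" and "\<beta> > 0" and "\<alpha> * \<beta> = pi ^ 2"
  shows "(\<Sum>n. exp (real (Suc n) * \<alpha>) / (real (Suc n) * (exp (2 * real (Suc n) * \<alpha>) - 1)))
       - (\<Sum>n. (-1) ^ (Suc n) / (real (Suc n) * (exp (2 * real (Suc n) * \<beta>) - 1)))
       = - (1/2) * ln 2 + (\<alpha> + 2 * \<beta>) / 24"
proof -
  define y where "y = \<alpha> / pi"
  have y: "y > 0" using assms(1) by (simp add: y_def)
  have "\<beta> = pi^2 / \<alpha>" using assms by (simp add: field_simps)
  hence args: "\<alpha> / (2 * pi) = y / 2" "\<alpha> / pi = y" "2 * \<beta> / pi = 2 / y" "\<beta> / pi = 1 / y"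
    and scaled: "pi / (12 * y) = \<beta> / 12" "pi * y / 24 = \<alpha> / 24"
    using assms(1) by (simp_all add: y_def field_simps power2_eq_square)
  show ?thesis
    using eta_transformation_halving[OF y]
    unfolding exp_series_eq_eta_diff[OF assms(1)] alternating_series_eq_eta_diff[OF assms(2)] args scaled
    by (simp add: field_simps)
qed

end
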